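(* Let $n\ge1$ and let $(p_{i,j})_{1\le i\le j\le n}$ be any family of $\frac{n(n+1)}{2}$ primitive elements of ${\cal H}_R$. Let $C$ be a $\mathbb{Q}$-vector space with basis $(e_0,\dots,e_n)$ and define $\Delta_C:C\to{\cal H}_R\otimes C$ by $\Delta_C(e_0)=1\otimes e_0$ and, for $1\le i\le n$, $$\Delta_C(e_i)=\Big[\sum_{j=0}^{i-1}\Big(\sum_{I_{i_1,j_1}\cdots I_{i_k,j_k}\in{\cal D}_{j+1,i}}p_{i_k,j_k}\top\cdots\top p_{i_1,j_1}\Big)\otimes e_j\Big]+1\otimes e_i.$$ Then $(C,\Delta_C)$ is a left ${\cal H}_R$-comodule (denoted $C_{(p_{i,j})}$).
   Context: A rooted tree is a finite connected and simply connected graph with a distinguished vertex (the root), edges oriented away from the root; its weight is its number of vertices. ${\cal H}_R$ is the commutative polynomial algebra over $\mathbb{Q}$ on the isomorphism classes of rooted trees; monomials are forests ($1$ is the empty forest). An admissible cut $C$ of a tree $t$ is a nonempty set of edges such that every path from the root to a vertex contains at most one edge of $C$; removing them gives a forest in which $R^C(t)$ is the tree containing the root and $P^C(t)$ the product of the others. ${\cal H}_R$ is a Hopf algebra with coproduct the algebra morphism $\Delta$ with $\Delta(t)=1\otimes t+t\otimes1+\sum_C P^C(t)\otimes R^C(t)$ on trees and counit $\varepsilon(1)=1$, $\varepsilon(t)=0$ on trees; $x$ is primitive iff $\Delta(x)=x\otimes1+1\otimes x$. For forests $M,N$: $M\top N=0$ if $N=1$, and otherwise $M\top N=\frac{1}{weight(N)}\sum_v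 N_v$, where $v$ runs over vertices of $N$ and $N_v$ is obtained from $N$ by attaching every tree of $M$ to $v$ (an edge from $v$ to each root of $M$); extended bilinearly; $p_k\top\cdots\top p_1:=(p_k\top\cdots\top p_2)\top p_1$. For integers $1\le i\le j$, $I_{i,j}=\{i,\dots,j\}$; a decomposition of $I_{i,j}$ is a partition of $I_{i,j}$ into intervals, written $I_{i_1,j_1}\cdots I_{i_k,j_k}$ with $i=i_1\le j_1<i_2\le j_2<\cdots<i_k\le j_k=j$ and $i_{r+1}=j_r+1$; ${\cal D}_{i,j}$ is the set of decompositions of $I_{i,j}$. A left ${\cal H}_R$-comodule is a vector space with a coassociative, counital linear map $C\to{\cal H}_R\otimes C$. *)

theory Defs
  imports Complex_Main "HOL-Library.Multiset" "HOL-Library.Poly_Mapping" "HOL-Library.Product_Plus"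
begin

text \<open>Isomorphism classes of (unordered) rooted trees: a tree is its root together
  with the multiset of subtrees hanging from the children of the root.
  Forests (monomials of H_R) are multisets of trees; the empty multiset is the empty forest 1.\<close>

datatype rtree = Node "rtree multiset"

type_synonym forest = "rtree multiset"

primrec weight_tree :: "rtree \<Rightarrow> nat" where
  "weight_tree (Node cs) = Suc (sum_mset (image_mset weight_tree cs))"

definition weight :: "forest \<Rightarrow> nat" where
  "weight F = sum_mset (image_mset weight_tree F)"

text \<open>H_R = forest  =>0  rat (product = product of forests, i.e.
  the polynomial algebra on trees); H_R \<otimes> H_R = (forest \<times> forest)  =>0  rat, etc.\<close>

type_synonym HR = "forest \<Rightarrow>\<^sub>0 rat"

definition smul :: "rat \<Rightarrow> ('a \<Rightarrow>\<^sub>0 rat) \<Rightarrow> ('a \<Rightarrow>\<^sub>0 rat)" where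
  "smul r x = Poly_Mapping.map (\<lambda>c. r * c) x"

definition lin :: "('a \<Rightarrow> ('b \<Rightarrow>\<^sub>0 rat)) \<Rightarrow> ('a \<Rightarrow>\<^sub>0 rat) \<Rightarrow> ('b \<Rightarrow>\<^sub>0 rat)" where
  "lin f x = (\<Sum>a\<in>Poly_Mapping.keys x. smul (Poly_Mapping.lookup x a) (f a))"

definition tens :: "('a \<Rightarrow>\<^sub>0 rat) \<Rightarrow> ('b \<Rightarrow>\<^sub>0 rat) \<Rightarrow> ('a \<times> 'b \<Rightarrow>\<^sub>0 rat)" where
  "tens x y = (\<Sum>a\<in>Poly_Mapping.keys x. \<Sum>b\<in>Poly_Mapping.keys y.
       Poly_Mapping.single (a, b) (Poly_Mapping.lookup x a * Poly_Mapping.lookup y b))"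

definition basis :: "'a \<Rightarrow> ('a \<Rightarrow>\<^sub>0 rat)" where
  "basis a = Poly_Mapping.single a 1"

definition tree :: "rtree \<Rightarrow> HR" where
  "tree t = basis {#t#}"

text \<open>cut_sum t = sum over all admissible cuts C of t, *including the empty cut*, of
  P^C(t) \<otimes> R^C(t).  An admissible cut of Node cs is obtained by choosing, independently
  for every child c of the root, either to cut the edge from the root to c (then c goes
  entirely into the pruned part, and no other edge of c may be cut), or not to cut it and
  to choose an admissible cut (possibly empty) inside c.  The right tensor factor of the
  product below records the forest of root-parts of the uncut children, which is then
  grafted onto a new root.\<close>

definition graft_root :: "(forest \<times> forest \<Rightarrow>\<^sub>0 rat) \<Rightarrow> (forest \<times> forest \<Rightarrow>\<^sub>0 rat)" where
  "graft_root x = lin (\<lambda>(P, F). basis (P, {#Node F#})) x"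

primrec cut_sum :: "rtree \<Rightarrow> (forest \<times> forest \<Rightarrow>\<^sub>0 rat)" where
  "cut_sum (Node cs) =
     graft_root (prod_mset (image_mset (\<lambda>c. basis ({#c#}, {#}) + cut_sum c) cs))"

text \<open>\<Delta>(t) = 1 \<otimes> t + t \<otimes> 1 + \<Sum>_{C nonempty} P^C(t) \<otimes> R^C(t); the empty cut term is 1 \<otimes> t.\<close>
definition Delta_tree :: "rtree \<Rightarrow> (forest \<times> forest \<Rightarrow>\<^sub>0 rat)" where
  "Delta_tree t = basis ({#t#}, {#}) + cut_sum t"

definition Delta :: "HR \<Rightarrow> (forest \<times> forest \<Rightarrow>\<^sub>0 rat)" where
  "Delta x = lin (\<lambda>F. prod_mset (image_mset Delta_tree F)) x"

definition counit :: "HR \<Rightarrow> rat" where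
  "counit x = Poly_Mapping.lookup x {#}"

definition primitive :: "HR \<Rightarrow> bool" where
  "primitive x \<longleftrightarrow> Delta x = tens x 1 + tens 1 x"

text \<open>graft M t: multiset of the trees t_v, v running over the vertices of t, where t_v is
  t with every tree of M attached to v.\<close>
primrec graft :: "forest \<Rightarrow> rtree \<Rightarrow> rtree multiset" where
  "graft M (Node cs) =
     add_mset (Node (cs + M))
       (sum_mset (image_mset (\<lambda>c. image_mset (\<lambda>c'. Node (add_mset c' (cs - {#c#}))) (graft M c)) cs))"

text \<open>graft_forest M N: multiset of the forests N_v, v running over the vertices of N.\<close>
definition graft_forest :: "forest \<Rightarrow> forest \<Rightarrow> forest multiset" where
  "graft_forest M N =
     sum_mset (image_mset (\<lambda>t. image_mset (\<lambda>t'. add_mset t' (N - {#t#})) (graft M t)) N)"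

definition top_forest :: "forest \<Rightarrow> forest \<Rightarrow> HR" where
  "top_forest M N = (if N = {#} then 0 else
     smul (1 / of_nat (weight N)) (sum_mset (image_mset basis (graft_forest M N))))"

definition top :: "HR \<Rightarrow> HR \<Rightarrow> HR" where
  "top x y = (\<Sum>M\<in>Poly_Mapping.keys x. \<Sum>N\<in>Poly_Mapping.keys y.
      smul (Poly_Mapping.lookup x M * Poly_Mapping.lookup y N) (top_forest M N))"

text \<open>itop [q1, ..., qk] = qk \<top> ... \<top> q1 = (qk \<top> ... \<top> q2) \<top> q1.\<close>
fun itop :: "HR list \<Rightarrow> HR" where
  "itop [] = 0"
| "itop [q] = q"
| "itop (q # qs) = top (itop qs) q"

text \<open>A decomposition I_{i1,j1} ... I_{ik,jk} of I_{a,b} is encoded as the list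
  [(i1,j1), ..., (ik,jk)].\<close>
definition decomps :: "nat \<Rightarrow> nat \<Rightarrow> (nat \<times> nat) list set" where
  "decomps a b = {ds. ds \<noteq> [] \<and> fst (hd ds) = a \<and> snd (last ds) = b
      \<and> (\<forall>r<length ds. fst (ds ! r) \<le> snd (ds ! r))
      \<and> (\<forall>r. Suc r < length ds \<longrightarrow> fst (ds ! Suc r) = snd (ds ! r) + 1)}"

text \<open>C has basis e_0, ..., e_n, realised as {v :: nat  =>0  rat. keys v \<subseteq> {0..n}}, e_i = basis i.
  deltaC p i = \<Delta>_C(e_i).\<close>
definition deltaC :: "(nat \<Rightarrow> nat \<Rightarrow> HR) \<Rightarrow> nat \<Rightarrow> (forest \<times> nat \<Rightarrow>\<^sub>0 rat)" where
  "deltaC p i =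
     (\<Sum>j<i. tens (\<Sum>ds\<in>decomps (Suc j) i. itop (map (\<lambda>(a, b). p a b) ds)) (basis j))
     + tens 1 (basis i)"

definition DeltaC :: "(nat \<Rightarrow> nat \<Rightarrow> HR) \<Rightarrow> (nat \<Rightarrow>\<^sub>0 rat) \<Rightarrow> (forest \<times> nat \<Rightarrow>\<^sub>0 rat)" where
  "DeltaC p v = lin (deltaC p) v"

definition Delta_id :: "(forest \<times> nat \<Rightarrow>\<^sub>0 rat) \<Rightarrow> (forest \<times> forest \<times> nat \<Rightarrow>\<^sub>0 rat)" where
  "Delta_id x = lin (\<lambda>(F, i). lin (\<lambda>(A, B). basis (A, B, i)) (Delta (basis F))) x"

definition id_tensor :: "((nat \<Rightarrow>\<^sub>0 rat) \<Rightarrow> (forest \<times> nat \<Rightarrow>\<^sub>0 rat))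
     \<Rightarrow> (forest \<times> nat \<Rightarrow>\<^sub>0 rat) \<Rightarrow> (forest \<times> forest \<times> nat \<Rightarrow>\<^sub>0 rat)" where
  "id_tensor DC x = lin (\<lambda>(F, i). tens (basis F) (DC (basis i))) x"

definition counit_id :: "(forest \<times> nat \<Rightarrow>\<^sub>0 rat) \<Rightarrow> (nat \<Rightarrow>\<^sub>0 rat)" where
  "counit_id x = lin (\<lambda>(F, i). smul (counit (basis F)) (basis i)) x"

text \<open>(V, DC) is a left H_R-comodule, where V = {v. keys v \<subseteq> B} is the Q-vector space with
  basis B: DC is a linear map V \<rightarrow> H_R \<otimes> V, coassociative and counital.\<close>
definition is_left_comodule ::
  "nat set \<Rightarrow> ((nat \<Rightarrow>\<^sub>0 rat) \<Rightarrow> (forest \<times> nat \<Rightarrow>\<^sub>0 rat)) \<Rightarrow> bool" where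
  "is_left_comodule B DC \<longleftrightarrow>
     (\<forall>u v r. Poly_Mapping.keys u \<subseteq> B \<longrightarrow> Poly_Mapping.keys v \<subseteq> B \<longrightarrow>
        DC (u + v) = DC u + DC v \<and> DC (smul r v) = smul r (DC v))
   \<and> (\<forall>v. Poly_Mapping.keys v \<subseteq> B \<longrightarrow>
        (\<forall>F i. Poly_Mapping.lookup (DC v) (F, i) \<noteq> 0 \<longrightarrow> i \<in> B)
      \<and> Delta_id (DC v) = id_tensor DC (DC v)
      \<and> counit_id (DC v) = v)"

end

theory Submission
  imports Defs
begin

text \<open>Write \<open>c(j,i)\<close> for the coefficient of \<open>e\<^sub>j\<close> in \<open>\<Delta>\<^sub>C(e\<^sub>i)\<close>, the sum of
  \<open>p(i\<^sub>k,j\<^sub>k) \<top> \<dots> \<top> p(i\<^sub>1,j\<^sub>1)\<close> over the decompositions of \<open>I(j+1,i)\<close>.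
  Coassociativity and counitality of \<open>\<Delta>\<^sub>C\<close> amount to \<open>\<epsilon>(c(j,i)) = 0\<close> and
  \<open>\<Delta>(c(j,i)) = c(j,i) \<otimes> 1 + 1 \<otimes> c(j,i) + \<Sum>\<^bsub>j<l<i\<^esub> c(l,i) \<otimes> c(j,l)\<close>.

  The key fact is that \<open>\<Delta>(x \<top> p) = (x \<top> p) \<otimes> 1 + \<Sum> x' \<otimes> (x'' \<top> p)\<close> for primitive \<open>p\<close>.
  It comes from the formula for the coproduct of a grafting, proved by induction on trees from
  the cocycle property of \<open>B\<^sup>+\<close>, together with the fact that \<open>\<Delta>\<close> preserves weight, so that the
  normalisation by \<open>1 / weight\<close> commutes with \<open>\<Delta>\<close>. Iterating, \<open>\<Delta>(p\<^sub>k \<top> \<dots> \<top> p\<^sub>1)\<close> is the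
  deconcatenation sum \<open>\<Sum>\<^sub>r (p\<^sub>k \<top> \<dots> \<top> p\<^bsub>r+1\<^esub>) \<otimes> (p\<^sub>r \<top> \<dots> \<top> p\<^sub>1)\<close>, and cutting a
  decomposition of \<open>I(j+1,i)\<close> between two of its intervals yields the sum over \<open>l\<close>.\<close>

section \<open>Linear algebra on finitely supported functions\<close>

lemma lookup_smul [simp]: "Poly_Mapping.lookup (smul r x) a = r * Poly_Mapping.lookup x a"
  unfolding smul_def by (simp add: Poly_Mapping.map.rep_eq when_def)

lemma smul_add_right: "smul r (x + y) = smul r x + smul r y"
  by (rule poly_mapping_eqI) (simp add: lookup_add algebra_simps)

lemma smul_add_left: "smul (r + s) x = smul r x + smul s x"
  by (rule poly_mapping_eqI) (simp add: lookup_add algebra_simps)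

lemma smul_zero_right [simp]: "smul r 0 = 0"
  by (rule poly_mapping_eqI) simp

lemma smul_zero_left [simp]: "smul 0 x = 0"
  by (rule poly_mapping_eqI) simp

lemma smul_one [simp]: "smul 1 x = x"
  by (rule poly_mapping_eqI) simp

lemma smul_smul [simp]: "smul r (smul s x) = smul (r * s) x"
  by (rule poly_mapping_eqI) simp

lemma smul_sum: "smul r (sum f S) = (\<Sum>a\<in>S. smul r (f a))"
  by (induction S rule: infinite_finite_induct) (auto simp: smul_add_right)

lemma smul_single [simp]: "smul r (Poly_Mapping.single a c) = Poly_Mapping.single a (r * c)"
  by (rule poly_mapping_eqI) (simp add: lookup_single when_def)

lemma smul_conv_mult: "smul r x = Poly_Mapping.single 0 r * (x :: 'a::monoid_add \<Rightarrow>\<^sub>0 rat)"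
  unfolding smul_def by (metis mult_map_scale_conv_mult)

lemma smul_mult_left: "smul r x * y = smul r (x * (y :: 'a::monoid_add \<Rightarrow>\<^sub>0 rat))"
  by (simp add: smul_conv_mult mult.assoc)

lemma smul_mult_right: "x * smul r y = smul r (x * (y :: 'a::comm_monoid_add \<Rightarrow>\<^sub>0 rat))"
  by (simp add: smul_conv_mult mult.left_commute)

lemma lin_superset:
  assumes "finite S" "Poly_Mapping.keys x \<subseteq> S"
  shows "lin f x = (\<Sum>a\<in>S. smul (Poly_Mapping.lookup x a) (f a))"
  unfolding lin_def using assms by (intro sum.mono_neutral_left) (auto simp: in_keys_iff)

lemma lin_add: "lin f (x + y) = lin f x + lin f y"
proof -
  let ?S = "Poly_Mapping.keys x \<union> Poly_Mapping.keys y"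
  have "lin f (x + y) = (\<Sum>a\<in>?S. smul (Poly_Mapping.lookup (x + y) a) (f a))"
    by (intro lin_superset) (auto dest: set_mp[OF keys_add])
  also have "\<dots> = (\<Sum>a\<in>?S. smul (Poly_Mapping.lookup x a) (f a))
                + (\<Sum>a\<in>?S. smul (Poly_Mapping.lookup y a) (f a))"
    by (simp add: lookup_add smul_add_left sum.distrib)
  also have "\<dots> = lin f x + lin f y"
    by (subst (1 2) lin_superset[of ?S]) auto
  finally show ?thesis .
qed

lemma lin_zero [simp]: "lin f 0 = 0"
  by (simp add: lin_def)

lemma lin_smul: "lin f (smul r x) = smul r (lin f x)"
proof -
  have "lin f (smul r x) = (\<Sum>a\<in>Poly_Mapping.keys x. smul (Poly_Mapping.lookup (smul r x) a) (f a))"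
    by (rule lin_superset) (auto simp: in_keys_iff)
  then show ?thesis by (simp add: lin_def smul_sum)
qed

lemma lin_basis [simp]: "lin f (basis a) = f a"
  by (simp add: lin_def basis_def)

lemma lin_cong: "(\<And>a. a \<in> Poly_Mapping.keys x \<Longrightarrow> f a = g a) \<Longrightarrow> lin f x = lin g x"
  by (simp add: lin_def)

lemma lin_fun_add: "lin (\<lambda>a. f a + g a) x = lin f x + lin g x"
  by (simp add: lin_def smul_add_right sum.distrib)

lemma lin_fun_zero [simp]: "lin (\<lambda>a. 0) x = 0"
  by (simp add: lin_def)

lemma lin_fun_smul: "lin (\<lambda>a. smul r (f a)) x = smul r (lin f x)"
  by (simp add: lin_def smul_sum mult.commute)

lemma lin_basis_eq: "lin basis x = x"
proof (rule poly_mapping_eqI)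
  fix k
  show "Poly_Mapping.lookup (lin basis x) k = Poly_Mapping.lookup x k"
    unfolding lin_def basis_def lookup_sum
    by (simp add: lookup_single when_def in_keys_iff)
qed

lemma lookup_lin:
  "Poly_Mapping.lookup (lin f x) k =
     (\<Sum>a\<in>Poly_Mapping.keys x. Poly_Mapping.lookup x a * Poly_Mapping.lookup (f a) k)"
  by (simp add: lin_def lookup_sum)

lemma keys_lin: "Poly_Mapping.keys (lin f x) \<subseteq> (\<Union>a\<in>Poly_Mapping.keys x. Poly_Mapping.keys (f a))"
proof -
  have "Poly_Mapping.keys (lin f x) \<subseteq>
      (\<Union>a\<in>Poly_Mapping.keys x. Poly_Mapping.keys (smul (Poly_Mapping.lookup x a) (f a)))"
    unfolding lin_def by (rule keys_sum)
  also have "\<dots> \<subseteq> (\<Union>a\<in>Poly_Mapping.keys x. Poly_Mapping.keys (f a))"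
    by (auto simp: in_keys_iff)
  finally show ?thesis .
qed

lemma basis_mult: "basis a * basis b = basis (a + b)"
  by (simp add: basis_def mult_single)

lemma basis_zero: "basis 0 = 1"
  by (simp add: basis_def)

lemma keys_basis [simp]: "Poly_Mapping.keys (basis a) = {a}"
  by (simp add: basis_def)

definition linear_pm :: "(('a \<Rightarrow>\<^sub>0 rat) \<Rightarrow> ('b \<Rightarrow>\<^sub>0 rat)) \<Rightarrow> bool" where
  "linear_pm L \<longleftrightarrow> (\<forall>x y. L (x + y) = L x + L y) \<and> (\<forall>r x. L (smul r x) = smul r (L x))"

lemma linear_pmI:
  "(\<And>x y. L (x + y) = L x + L y) \<Longrightarrow> (\<And>r x. L (smul r x) = smul r (L x)) \<Longrightarrow> linear_pm L"
  by (simp add: linear_pm_def)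

lemma linear_pm_add: "linear_pm L \<Longrightarrow> L (x + y) = L x + L y"
  by (simp add: linear_pm_def)

lemma linear_pm_smul: "linear_pm L \<Longrightarrow> L (smul r x) = smul r (L x)"
  by (simp add: linear_pm_def)

lemma linear_pm_zero: "linear_pm L \<Longrightarrow> L 0 = 0"
  by (metis linear_pm_smul smul_zero_left)

lemma linear_pm_sum:
  assumes "linear_pm L"
  shows "L (sum f S) = (\<Sum>i\<in>S. L (f i))"
  by (induction S rule: infinite_finite_induct)
     (auto simp: linear_pm_add[OF assms] linear_pm_zero[OF assms])

lemma linear_pm_sum_mset:
  assumes "linear_pm L"
  shows "L (sum_mset (image_mset f A)) = sum_mset (image_mset (\<lambda>x. L (f x)) A)"
  by (induction A) (auto simp: linear_pm_add[OF assms] linear_pm_zero[OF assms])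

lemma linear_pm_lin [simp, intro]: "linear_pm (lin f)"
  by (simp add: linear_pm_def lin_add lin_smul)

lemma linear_pm_lin_comp:
  assumes "linear_pm L"
  shows "L (lin f x) = lin (\<lambda>a. L (f a)) x"
  unfolding lin_def by (simp add: linear_pm_sum[OF assms] linear_pm_smul[OF assms])

lemma lin_lin: "lin g (lin f x) = lin (\<lambda>a. lin g (f a)) x"
  by (rule linear_pm_lin_comp) simp

lemma linear_pm_eqI:
  assumes "linear_pm L" "linear_pm L'" "\<And>a. L (basis a) = L' (basis a)"
  shows "L x = L' x"
  using linear_pm_lin_comp[OF assms(1), of basis x] linear_pm_lin_comp[OF assms(2), of basis x]
  by (simp add: assms(3) lin_basis_eq)

lemma bilinear_eqI:
  fixes B B' :: "('a \<Rightarrow>\<^sub>0 rat) \<Rightarrow> ('b \<Rightarrow>\<^sub>0 rat) \<Rightarrow> ('c \<Rightarrow>\<^sub>0 rat)"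
  assumes "\<And>y. linear_pm (\<lambda>x. B x y)" "\<And>x. linear_pm (\<lambda>y. B x y)"
    and "\<And>y. linear_pm (\<lambda>x. B' x y)" "\<And>x. linear_pm (\<lambda>y. B' x y)"
    and "\<And>a b. B (basis a) (basis b) = B' (basis a) (basis b)"
  shows "B x y = B' x y"
proof -
  have "B (basis a) y = B' (basis a) y" for a
    by (rule linear_pm_eqI[where L = "B (basis a)" and L' = "B' (basis a)"])
       (rule assms(2), rule assms(4), rule assms(5))
  then show ?thesis
    by (rule linear_pm_eqI[where L = "\<lambda>x. B x y" and L' = "\<lambda>x. B' x y", OF assms(1,3)])
qed

lemma linear_pm_id: "linear_pm (\<lambda>x. x)"
  by (simp add: linear_pm_def)

lemma linear_pm_const_zero: "linear_pm (\<lambda>x. 0)"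
  by (simp add: linear_pm_def)

lemma linear_pm_plus: "linear_pm L \<Longrightarrow> linear_pm L' \<Longrightarrow> linear_pm (\<lambda>x. L x + L' x)"
  by (simp add: linear_pm_def smul_add_right algebra_simps)

lemma linear_pm_lin_compI: "linear_pm L \<Longrightarrow> linear_pm (\<lambda>x. lin f (L x))"
  by (simp add: linear_pm_def lin_add lin_smul)

lemma linear_pm_lin_funI: "(\<And>k. linear_pm (f k)) \<Longrightarrow> linear_pm (\<lambda>y. lin (\<lambda>k. f k y) x)"
  by (simp add: linear_pm_def lin_fun_add lin_fun_smul)

lemma linear_pm_mult_leftI:
  "linear_pm L \<Longrightarrow> linear_pm (\<lambda>x. L x * (c :: 'a::monoid_add \<Rightarrow>\<^sub>0 rat))"
  by (simp add: linear_pm_def distrib_right smul_mult_left)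

lemma linear_pm_mult_rightI:
  "linear_pm L \<Longrightarrow> linear_pm (\<lambda>x. (c :: 'a::comm_monoid_add \<Rightarrow>\<^sub>0 rat) * L x)"
  by (simp add: linear_pm_def distrib_left smul_mult_right)


lemma tens_eq_lin: "tens x y = lin (\<lambda>a. lin (\<lambda>b. basis (a, b)) y) x"
  unfolding tens_def lin_def basis_def by (simp add: smul_sum mult.commute)

lemma tens_basis [simp]: "tens (basis a) (basis b) = basis (a, b)"
  by (simp add: tens_eq_lin)

lemma lookup_tens:
  "Poly_Mapping.lookup (tens x y) (a, b) = Poly_Mapping.lookup x a * Poly_Mapping.lookup y b"
proof -
  have "Poly_Mapping.lookup (tens x y) (a, b) =
      (\<Sum>a'\<in>Poly_Mapping.keys x. \<Sum>b'\<in>Poly_Mapping.keys y.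
        (if a' = a \<and> b' = b then Poly_Mapping.lookup x a' * Poly_Mapping.lookup y b' else 0))"
    by (simp add: tens_def lookup_sum lookup_single when_def)
  also have "\<dots> = (\<Sum>a'\<in>Poly_Mapping.keys x. if a' = a then (\<Sum>b'\<in>Poly_Mapping.keys y.
        (if b' = b then Poly_Mapping.lookup x a' * Poly_Mapping.lookup y b' else 0)) else 0)"
    by (rule sum.cong) auto
  also have "\<dots> = Poly_Mapping.lookup x a * Poly_Mapping.lookup y b"
    by (simp add: in_keys_iff)
  finally show ?thesis .
qed

lemma linear_pm_tens_leftI: "linear_pm L \<Longrightarrow> linear_pm (\<lambda>x. tens (L x) y)"
  unfolding tens_eq_lin by (rule linear_pm_lin_compI)

lemma linear_pm_tens_rightI: "linear_pm L \<Longrightarrow> linear_pm (\<lambda>y. tens x (L y))"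
  unfolding tens_eq_lin by (intro linear_pm_lin_funI linear_pm_lin_compI)

lemmas linear_pm_intros =
  linear_pm_id linear_pm_const_zero linear_pm_plus linear_pm_lin_compI
  linear_pm_mult_leftI linear_pm_mult_rightI linear_pm_tens_leftI linear_pm_tens_rightI

lemma linear_pm_tens_left: "linear_pm (\<lambda>x. tens x y)"
  by (intro linear_pm_intros)

lemma linear_pm_tens_right: "linear_pm (\<lambda>y. tens x y)"
  by (intro linear_pm_intros)

lemma tens_add_left: "tens (x + y) z = tens x z + tens y z"
  by (rule linear_pm_add[OF linear_pm_tens_left])

lemma tens_add_right: "tens z (x + y) = tens z x + tens z y"
  by (rule linear_pm_add[OF linear_pm_tens_right])

lemma tens_zero_left [simp]: "tens 0 z = 0"
  by (simp add: tens_def)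

lemma tens_zero_right [simp]: "tens z 0 = 0"
  by (simp add: tens_def)

lemma tens_sum_left: "tens (sum f S) z = (\<Sum>i\<in>S. tens (f i) z)"
  by (rule linear_pm_sum[OF linear_pm_tens_left])

lemma tens_sum_right: "tens z (sum f S) = (\<Sum>i\<in>S. tens z (f i))"
  by (rule linear_pm_sum[OF linear_pm_tens_right])

lemma tens_one_one: "tens (1 :: 'a::zero \<Rightarrow>\<^sub>0 rat) (1 :: 'b::zero \<Rightarrow>\<^sub>0 rat) = 1"
  by (metis basis_def single_one tens_basis zero_prod_def)

lemma tens_mult:
  fixes x u :: "'a::comm_monoid_add \<Rightarrow>\<^sub>0 rat" and y v :: "'b::comm_monoid_add \<Rightarrow>\<^sub>0 rat"
  shows "tens x y * tens u v = tens (x * u) (y * v)"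
proof -
  have basis_case: "tens x (basis b) * tens u (basis d) = tens (x * u) (basis b * basis d)"
    for x u :: "'a \<Rightarrow>\<^sub>0 rat" and b d :: 'b
    by (rule bilinear_eqI[where B = "\<lambda>x u. tens x (basis b) * tens u (basis d)"
                             and B' = "\<lambda>x u. tens (x * u) (basis b * basis d)"])
       (intro linear_pm_intros | simp add: basis_mult)+
  show ?thesis
    by (rule bilinear_eqI[where B = "\<lambda>y v. tens x y * tens u v" and B' = "\<lambda>y v. tens (x * u) (y * v)"])
       (intro linear_pm_intros | simp only: basis_case)+
qed


definition emb_left :: "('a \<Rightarrow>\<^sub>0 rat) \<Rightarrow> ('a \<times> 'b::zero \<Rightarrow>\<^sub>0 rat)" where
  "emb_left x = tens x 1"

definition emb_right :: "('b \<Rightarrow>\<^sub>0 rat) \<Rightarrow> ('a::zero \<times> 'b \<Rightarrow>\<^sub>0 rat)" where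
  "emb_right y = tens 1 y"

lemma tens_eq_emb_mult:
  "tens x y = emb_left x * emb_right (y :: 'b::comm_monoid_add \<Rightarrow>\<^sub>0 rat)"
  for x :: "'a::comm_monoid_add \<Rightarrow>\<^sub>0 rat"
  by (simp add: emb_left_def emb_right_def tens_mult)

lemma emb_left_mult:
  "emb_left (x * y) = emb_left x * (emb_left y :: 'a::comm_monoid_add \<times> 'b::comm_monoid_add \<Rightarrow>\<^sub>0 rat)"
  by (simp add: emb_left_def tens_mult)

lemma emb_right_mult:
  "emb_right (x * y) = emb_right x * (emb_right y :: 'a::comm_monoid_add \<times> 'b::comm_monoid_add \<Rightarrow>\<^sub>0 rat)"
  by (simp add: emb_right_def tens_mult)

lemma emb_left_add: "emb_left (x + y) = emb_left x + emb_left y"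
  by (simp add: emb_left_def tens_add_left)

lemma emb_right_add: "emb_right (x + y) = emb_right x + emb_right y"
  by (simp add: emb_right_def tens_add_right)

lemma emb_left_zero [simp]: "emb_left 0 = 0"
  by (simp add: emb_left_def)

lemma emb_left_one [simp]: "emb_left 1 = 1"
  by (simp add: emb_left_def tens_one_one)

lemma emb_right_one [simp]: "emb_right 1 = 1"
  by (simp add: emb_right_def tens_one_one)

lemma emb_left_basis: "emb_left (basis a) = basis (a, 0)"
  by (simp add: emb_left_def flip: basis_zero)

lemma emb_right_basis: "emb_right (basis b) = basis (0, b)"
  by (simp add: emb_right_def flip: basis_zero)

lemma linear_pm_emb_leftI: "linear_pm L \<Longrightarrow> linear_pm (\<lambda>x. emb_left (L x))"
  unfolding emb_left_def by (rule linear_pm_tens_leftI)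

lemma linear_pm_emb_rightI: "linear_pm L \<Longrightarrow> linear_pm (\<lambda>x. emb_right (L x))"
  unfolding emb_right_def by (rule linear_pm_tens_rightI)

definition Delta_forest :: "forest \<Rightarrow> (forest \<times> forest \<Rightarrow>\<^sub>0 rat)" where
  "Delta_forest F = prod_mset (image_mset Delta_tree F)"

lemma Delta_eq_lin: "Delta = lin Delta_forest"
  by (simp add: fun_eq_iff Delta_def Delta_forest_def[abs_def])

lemma Delta_basis [simp]: "Delta (basis F) = Delta_forest F"
  by (simp add: Delta_eq_lin)

lemma Delta_forest_empty [simp]: "Delta_forest {#} = 1"
  by (simp add: Delta_forest_def)

lemma Delta_forest_add_mset: "Delta_forest (add_mset t F) = Delta_tree t * Delta_forest F"
  by (simp add: Delta_forest_def)

lemma Delta_forest_plus: "Delta_forest (F + G) = Delta_forest F * Delta_forest G"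
  by (simp add: Delta_forest_def)

lemma Delta_forest_single: "Delta_forest {#t#} = Delta_tree t"
  by (simp add: Delta_forest_def)

lemma linear_pm_Delta: "linear_pm Delta"
  by (simp add: Delta_eq_lin)

lemma linear_pm_DeltaI: "linear_pm L \<Longrightarrow> linear_pm (\<lambda>x. Delta (L x))"
  unfolding Delta_eq_lin by (rule linear_pm_lin_compI)

lemma Delta_add: "Delta (x + y) = Delta x + Delta y"
  by (simp add: Delta_eq_lin lin_add)

lemma Delta_zero [simp]: "Delta 0 = 0"
  by (simp add: Delta_eq_lin)

lemma Delta_one [simp]: "Delta 1 = 1"
  by (simp flip: basis_zero)

lemma Delta_mult: "Delta (x * y) = Delta x * Delta y"
  by (rule bilinear_eqI[where B = "\<lambda>x y. Delta (x * y)" and B' = "\<lambda>x y. Delta x * Delta y"])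
     (auto intro!: linear_pm_intros linear_pm_DeltaI simp: basis_mult Delta_forest_plus)

definition B_plus :: "HR \<Rightarrow> HR" where
  "B_plus x = lin (\<lambda>F. basis {#Node F#}) x"

lemma B_plus_basis [simp]: "B_plus (basis F) = basis {#Node F#}"
  by (simp add: B_plus_def)

lemma linear_pm_B_plusI: "linear_pm L \<Longrightarrow> linear_pm (\<lambda>x. B_plus (L x))"
  unfolding B_plus_def by (rule linear_pm_lin_compI)

lemma graft_root_eq_lin: "graft_root = lin (\<lambda>k. basis (fst k, {#Node (snd k)#}))"
  by (simp add: fun_eq_iff graft_root_def split_def)

lemma graft_root_basis [simp]: "graft_root (basis (A, F)) = basis (A, {#Node F#})"
  by (simp add: graft_root_eq_lin)

lemma graft_root_add: "graft_root (X + Y) = graft_root X + graft_root Y"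
  by (simp add: graft_root_eq_lin lin_add)

lemma linear_pm_graft_rootI: "linear_pm L \<Longrightarrow> linear_pm (\<lambda>x. graft_root (L x))"
  unfolding graft_root_eq_lin by (rule linear_pm_lin_compI)

lemma graft_root_tens: "graft_root (tens x y) = tens x (B_plus y)"
  by (rule bilinear_eqI[where B = "\<lambda>x y. graft_root (tens x y)" and B' = "\<lambda>x y. tens x (B_plus y)"])
     (auto intro!: linear_pm_intros linear_pm_graft_rootI linear_pm_B_plusI)

lemma graft_root_emb_left_mult: "graft_root (emb_left x * Y) = emb_left x * graft_root Y"
  by (rule bilinear_eqI[where B = "\<lambda>x Y. graft_root (emb_left x * Y)"
                          and B' = "\<lambda>x Y. emb_left x * graft_root Y"])
     (auto intro!: linear_pm_intros linear_pm_graft_rootI linear_pm_emb_leftI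
           simp: emb_left_basis basis_mult)

lemma Delta_tree_Node:
  "Delta_tree (Node cs) = basis ({#Node cs#}, {#}) + graft_root (Delta_forest cs)"
proof -
  have "Delta_tree = (\<lambda>c. basis ({#c#}, {#}) + cut_sum c)"
    by (simp add: fun_eq_iff Delta_tree_def)
  then show ?thesis by (simp add: Delta_tree_def Delta_forest_def)
qed

lemma Delta_B_plus: "Delta (B_plus x) = emb_left (B_plus x) + graft_root (Delta x)"
  by (rule linear_pm_eqI[where L = "\<lambda>x. Delta (B_plus x)"
                           and L' = "\<lambda>x. emb_left (B_plus x) + graft_root (Delta x)"])
     (auto intro!: linear_pm_intros linear_pm_DeltaI linear_pm_B_plusI linear_pm_emb_leftI
         linear_pm_graft_rootI simp: Delta_forest_single Delta_tree_Node emb_left_basis)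


text \<open>\<open>grafts M N = \<Sum>\<^sub>v N\<^sub>v\<close> is \<open>M \<top> N\<close> without the factor \<open>1 / weight N\<close>.\<close>

definition grafts :: "forest \<Rightarrow> forest \<Rightarrow> HR" where
  "grafts M N = sum_mset (image_mset basis (graft_forest M N))"

definition grafts_tree :: "forest \<Rightarrow> rtree \<Rightarrow> HR" where
  "grafts_tree M t = sum_mset (image_mset tree (graft M t))"

definition graft_lin :: "forest \<Rightarrow> HR \<Rightarrow> HR" where
  "graft_lin M y = lin (grafts M) y"

lemma graft_lin_basis [simp]: "graft_lin M (basis F) = grafts M F"
  by (simp add: graft_lin_def)

lemma linear_pm_graft_linI: "linear_pm L \<Longrightarrow> linear_pm (\<lambda>x. graft_lin M (L x))"
  unfolding graft_lin_def by (rule linear_pm_lin_compI)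

lemma image_mset_sum_mset: "image_mset f (sum_mset A) = sum_mset (image_mset (image_mset f) A)"
  by (induction A) auto

lemma basis_add_mset: "basis (add_mset t N) = tree t * basis N"
  by (simp add: basis_mult tree_def)

lemma graft_forest_empty [simp]: "graft_forest M {#} = {#}"
  by (simp add: graft_forest_def)

lemma graft_forest_add_mset:
  "graft_forest M (add_mset t N) =
     image_mset (\<lambda>t'. add_mset t' N) (graft M t) + image_mset (add_mset t) (graft_forest M N)"
proof -
  have "image_mset (\<lambda>s. image_mset (\<lambda>t'. add_mset t' (add_mset t N - {#s#})) (graft M s)) N
      = image_mset (\<lambda>s. image_mset (add_mset t) (image_mset (\<lambda>t'. add_mset t' (N - {#s#})) (graft M s))) N"
  proof (rule image_mset_cong)
    fix s assume "s \<in># N"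
    then have "add_mset t N - {#s#} = add_mset t (N - {#s#})"
      by (metis add_mset_commute add_mset_remove_trivial insert_DiffM)
    then show "image_mset (\<lambda>t'. add_mset t' (add_mset t N - {#s#})) (graft M s)
             = image_mset (add_mset t) (image_mset (\<lambda>t'. add_mset t' (N - {#s#})) (graft M s))"
      by (simp add: add_mset_commute image_mset.compositionality o_def)
  qed
  then show ?thesis
    by (simp add: graft_forest_def image_mset_sum_mset image_mset.compositionality o_def)
qed

lemma grafts_empty [simp]: "grafts M {#} = 0"
  by (simp add: grafts_def)

lemma grafts_add_mset: "grafts M (add_mset t N) = grafts_tree M t * basis N + tree t * grafts M N"
proof -
  have "grafts M (add_mset t N) = sum_mset (image_mset (\<lambda>t'. tree t' * basis N) (graft M t))
        + sum_mset (image_mset (\<lambda>F. tree t * basis F) (graft_forest M N))"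
    by (simp add: grafts_def graft_forest_add_mset image_mset.compositionality o_def
                  basis_add_mset)
  also have "\<dots> = grafts_tree M t * basis N + tree t * grafts M N"
    unfolding grafts_tree_def grafts_def
    by (simp add: linear_pm_sum_mset[OF linear_pm_mult_leftI[OF linear_pm_id]]
                  linear_pm_sum_mset[OF linear_pm_mult_rightI[OF linear_pm_id]])
  finally show ?thesis .
qed

lemma grafts_single: "grafts M {#t#} = grafts_tree M t"
  using grafts_add_mset[of M t "{#}"] by (simp add: basis_zero)

lemma grafts_plus: "grafts M (F + G) = grafts M F * basis G + basis F * grafts M G"
proof (induction F)
  case empty
  then show ?case by (simp add: basis_zero)
next
  case (add t F)
  have "grafts M (add_mset t F + G) = grafts_tree M t * basis (F + G) + tree t * grafts M (F + G)"
    by (simp add: grafts_add_mset)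
  also have "\<dots> = (grafts_tree M t * basis F + tree t * grafts M F) * basis G
                 + basis (add_mset t F) * grafts M G"
    by (simp add: add.IH basis_add_mset basis_mult[symmetric] algebra_simps)
  finally show ?case by (simp add: grafts_add_mset)
qed

lemma graft_lin_mult: "graft_lin M (x * y) = graft_lin M x * y + x * graft_lin M y"
  by (rule bilinear_eqI[where B = "\<lambda>x y. graft_lin M (x * y)"
                          and B' = "\<lambda>x y. graft_lin M x * y + x * graft_lin M y"])
     (auto intro!: linear_pm_intros linear_pm_graft_linI simp: basis_mult grafts_plus)

lemma graft_lin_one [simp]: "graft_lin M 1 = 0"
  by (simp flip: basis_zero)

lemma graft_Node: "graft M (Node cs) = add_mset (Node (cs + M)) (image_mset Node (graft_forest M cs))"
  by (simp add: graft_forest_def image_mset_sum_mset image_mset.compositionality o_def)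

lemma grafts_tree_Node: "grafts_tree M (Node cs) = basis {#Node (cs + M)#} + B_plus (grafts M cs)"
proof -
  have "B_plus (grafts M cs) = sum_mset (image_mset (\<lambda>F. basis {#Node F#}) (graft_forest M cs))"
    unfolding grafts_def by (simp add: linear_pm_sum_mset[OF linear_pm_B_plusI[OF linear_pm_id]])
  then show ?thesis
    by (simp add: grafts_tree_def tree_def graft_Node image_mset.compositionality o_def del: graft.simps)
qed


section \<open>The coproduct of a grafting\<close>

text \<open>For \<open>\<Delta> y = \<Sum> y' \<otimes> y''\<close> and \<open>\<Delta> M = \<Sum> M' \<otimes> M''\<close>, an admissible cut of a grafting of
  \<open>M\<close> onto \<open>y\<close> either leaves the grafting in the trunk or cuts inside \<open>M\<close>; accordingly
  \<open>\<Delta> (graft_lin M y) = \<Sum> y' M' \<otimes> graft_lin M'' y'' + \<Sum> graft_lin M y' \<otimes> y''\<close>.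
  The right-hand side, as a function of \<open>\<Delta> y\<close>, is \<open>graft_tensor M\<close>.\<close>

definition graft_split :: "forest \<Rightarrow> HR \<Rightarrow> (forest \<times> forest \<Rightarrow>\<^sub>0 rat)" where
  "graft_split M b = lin (\<lambda>k. tens (basis (fst k)) (graft_lin (snd k) b)) (Delta_forest M)"

definition graft_tensor ::
  "forest \<Rightarrow> (forest \<times> forest \<Rightarrow>\<^sub>0 rat) \<Rightarrow> (forest \<times> forest \<Rightarrow>\<^sub>0 rat)" where
  "graft_tensor M T = lin (\<lambda>k. emb_left (basis (fst k)) * graft_split M (basis (snd k))
                              + emb_left (grafts M (fst k)) * emb_right (basis (snd k))) T"

lemma graft_split_one [simp]: "graft_split M 1 = 0"
  by (simp add: graft_split_def)

lemma linear_pm_graft_splitI: "linear_pm L \<Longrightarrow> linear_pm (\<lambda>x. graft_split M (L x))"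
  unfolding graft_split_def by (intro linear_pm_lin_funI linear_pm_intros linear_pm_graft_linI)

lemma linear_pm_graft_tensorI: "linear_pm L \<Longrightarrow> linear_pm (\<lambda>x. graft_tensor M (L x))"
  unfolding graft_tensor_def by (rule linear_pm_lin_compI)

lemma graft_tensor_tens:
  "graft_tensor M (tens a b) = emb_left a * graft_split M b + emb_left (graft_lin M a) * emb_right b"
  by (rule bilinear_eqI[where B = "\<lambda>a b. graft_tensor M (tens a b)"
                          and B' = "\<lambda>a b. emb_left a * graft_split M b + emb_left (graft_lin M a) * emb_right b"])
     (auto intro!: linear_pm_intros linear_pm_graft_tensorI linear_pm_emb_leftI linear_pm_emb_rightI
         linear_pm_graft_splitI linear_pm_graft_linI simp: graft_tensor_def)

lemma graft_tensor_emb_left: "graft_tensor M (emb_left a) = emb_left (graft_lin M a)"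
  using graft_tensor_tens[of M a 1] by (simp flip: emb_left_def)

lemma graft_tensor_emb_right: "graft_tensor M (emb_right b) = graft_split M b"
  using graft_tensor_tens[of M 1 b] by (simp add: emb_left_def flip: emb_right_def)

lemma graft_tensor_add: "graft_tensor M (X + Y) = graft_tensor M X + graft_tensor M Y"
  by (simp add: graft_tensor_def lin_add)

lemma graft_split_mult:
  "graft_split M (b * c) = graft_split M b * emb_right c + emb_right b * graft_split M c"
proof -
  have "graft_split M (b * c) = lin (\<lambda>k. tens (basis (fst k)) (graft_lin (snd k) b) * emb_right c
        + emb_right b * tens (basis (fst k)) (graft_lin (snd k) c)) (Delta_forest M)"
    unfolding graft_split_def
    by (rule lin_cong) (simp add: graft_lin_mult tens_add_right emb_right_def tens_mult)
  then show ?thesis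
    by (simp add: lin_fun_add graft_split_def linear_pm_lin_comp[OF linear_pm_mult_leftI[OF linear_pm_id]]
                  linear_pm_lin_comp[OF linear_pm_mult_rightI[OF linear_pm_id]])
qed

lemma graft_tensor_mult: "graft_tensor M (X * Y) = graft_tensor M X * Y + X * graft_tensor M Y"
proof (rule bilinear_eqI[where B = "\<lambda>X Y. graft_tensor M (X * Y)"
                           and B' = "\<lambda>X Y. graft_tensor M X * Y + X * graft_tensor M Y"])
  fix a b :: "forest \<times> forest"
  obtain A B C E where ab: "a = (A, B)" "b = (C, E)" by fastforce
  have "basis (A, B) = tens (basis A) (basis B)" "basis (C, E) = tens (basis C) (basis E)"
    by simp_all
  then show "graft_tensor M (basis a * basis b) = graft_tensor M (basis a) * basis b + basis a * graft_tensor M (basis b)"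
    unfolding ab
    by (simp only: tens_mult graft_tensor_tens graft_split_mult graft_lin_mult)
       (simp add: tens_eq_emb_mult emb_left_mult emb_right_mult emb_left_add emb_right_add
                  algebra_simps)
qed (auto intro!: linear_pm_intros linear_pm_graft_tensorI)


lemma graft_split_B_plus:
  "graft_root (emb_right (basis F) * Delta_forest M) + graft_root (graft_split M (basis F))
     = graft_split M (basis {#Node F#})"
proof -
  have "graft_root (emb_right (basis F) * Delta_forest M)
      = lin (\<lambda>k. graft_root (emb_right (basis F) * basis k)) (Delta_forest M)"
    by (subst (1) lin_basis_eq[symmetric], rule linear_pm_lin_comp)
       (intro linear_pm_intros linear_pm_graft_rootI)
  also have "\<dots> = lin (\<lambda>k. tens (basis (fst k)) (basis {#Node (F + snd k)#})) (Delta_forest M)"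
    by (rule lin_cong) (auto simp: emb_right_basis basis_mult)
  finally have "graft_root (emb_right (basis F) * Delta_forest M) = \<dots>" .
  moreover have "graft_root (graft_split M (basis F))
      = lin (\<lambda>k. tens (basis (fst k)) (B_plus (grafts (snd k) F))) (Delta_forest M)"
    unfolding graft_split_def
    by (simp add: linear_pm_lin_comp[OF linear_pm_graft_rootI[OF linear_pm_id]] graft_root_tens)
  moreover have "graft_split M (basis {#Node F#})
      = lin (\<lambda>k. tens (basis (fst k)) (basis {#Node (F + snd k)#})
                 + tens (basis (fst k)) (B_plus (grafts (snd k) F))) (Delta_forest M)"
    by (simp add: graft_split_def grafts_single grafts_tree_Node tens_add_right)
  ultimately show ?thesis
    by (simp only: lin_fun_add)
qed

lemma graft_root_graft_tensor:
  "graft_root (X * Delta_forest M) + graft_root (graft_tensor M X) = graft_tensor M (graft_root X)"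
proof (rule linear_pm_eqI[where L = "\<lambda>X. graft_root (X * Delta_forest M) + graft_root (graft_tensor M X)"
                             and L' = "\<lambda>X. graft_tensor M (graft_root X)"])
  show "linear_pm (\<lambda>X. graft_root (X * Delta_forest M) + graft_root (graft_tensor M X))"
       "linear_pm (\<lambda>X. graft_tensor M (graft_root X))"
    by (intro linear_pm_intros linear_pm_graft_rootI linear_pm_graft_tensorI)+
  fix a :: "forest \<times> forest"
  obtain A F where a: "a = (A, F)" by fastforce
  have basis_a: "basis (A, F) = emb_left (basis A) * emb_right (basis F)"
    by (simp flip: tens_eq_emb_mult)
  have "graft_root (basis (A, F) * Delta_forest M)
      = emb_left (basis A) * graft_root (emb_right (basis F) * Delta_forest M)"
    by (simp only: basis_a mult.assoc graft_root_emb_left_mult)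
  moreover have "graft_root (graft_tensor M (basis (A, F)))
      = emb_left (basis A) * graft_root (graft_split M (basis F))
        + emb_left (grafts M A) * emb_right (basis {#Node F#})"
    using graft_tensor_tens[of M "basis A" "basis F"]
    by (simp add: graft_root_add graft_root_emb_left_mult emb_right_basis)
  moreover have "graft_tensor M (graft_root (basis (A, F)))
      = emb_left (basis A) * graft_split M (basis {#Node F#})
        + emb_left (grafts M A) * emb_right (basis {#Node F#})"
    using graft_tensor_tens[of M "basis A" "basis {#Node F#}"] by simp
  ultimately show "graft_root (basis a * Delta_forest M) + graft_root (graft_tensor M (basis a))
      = graft_tensor M (graft_root (basis a))"
    by (simp add: a graft_split_B_plus[symmetric] distrib_left add.assoc)
qed

lemma Delta_grafts_tree_Node:
  assumes "Delta (grafts M cs) = graft_tensor M (Delta_forest cs)"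
  shows "Delta (grafts_tree M (Node cs)) = graft_tensor M (Delta_tree (Node cs))"
proof -
  have "Delta (grafts_tree M (Node cs))
      = basis ({#Node (cs + M)#}, {#}) + graft_root (Delta_forest cs * Delta_forest M)
        + emb_left (B_plus (grafts M cs)) + graft_root (graft_tensor M (Delta_forest cs))"
    by (simp add: grafts_tree_Node Delta_add Delta_B_plus Delta_forest_single Delta_tree_Node
                  Delta_forest_plus assms)
  also have "\<dots> = emb_left (grafts_tree M (Node cs)) + graft_tensor M (graft_root (Delta_forest cs))"
    by (simp add: graft_root_graft_tensor[symmetric] grafts_tree_Node emb_left_add emb_left_basis
                  algebra_simps)
  also have "\<dots> = graft_tensor M (Delta_tree (Node cs))"
    by (simp add: Delta_tree_Node graft_tensor_add graft_tensor_emb_left grafts_single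
             flip: emb_left_basis)
  finally show ?thesis .
qed

lemma Delta_grafts_add_mset:
  assumes "Delta (grafts_tree M t) = graft_tensor M (Delta_tree t)"
    and "Delta (grafts M F) = graft_tensor M (Delta_forest F)"
  shows "Delta (grafts M (add_mset t F)) = graft_tensor M (Delta_forest (add_mset t F))"
  by (simp add: grafts_add_mset Delta_add Delta_mult tree_def Delta_forest_single
                Delta_forest_add_mset assms graft_tensor_mult)

lemma graft_tensor_one [simp]: "graft_tensor M 1 = 0"
  using graft_tensor_emb_left[of M 1] by simp

lemma Delta_grafts_tree: "Delta (grafts_tree M t) = graft_tensor M (Delta_tree t)"
proof (induction t)
  case (Node cs)
  have "Delta (grafts M F) = graft_tensor M (Delta_forest F)" if "set_mset F \<subseteq> set_mset cs" for F
    using that by (induction F) (auto intro: Delta_grafts_add_mset Node.IH)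
  then show ?case by (intro Delta_grafts_tree_Node) simp
qed

lemma Delta_grafts: "Delta (grafts M F) = graft_tensor M (Delta_forest F)"
  by (induction F) (simp_all add: Delta_grafts_add_mset Delta_grafts_tree)

lemma Delta_graft_lin: "Delta (graft_lin M x) = graft_tensor M (Delta x)"
  by (rule linear_pm_eqI[where L = "\<lambda>x. Delta (graft_lin M x)" and L' = "\<lambda>x. graft_tensor M (Delta x)"])
     (auto intro!: linear_pm_intros linear_pm_DeltaI linear_pm_graft_linI linear_pm_graft_tensorI
           simp: Delta_grafts)

lemma Delta_graft_lin_primitive:
  assumes "primitive q"
  shows "Delta (graft_lin M q) = emb_left (graft_lin M q) + graft_split M q"
  using assms
  by (simp add: primitive_def Delta_graft_lin graft_tensor_add graft_tensor_emb_left
                graft_tensor_emb_right flip: emb_left_def emb_right_def)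


lemma weight_empty [simp]: "weight {#} = 0"
  by (simp add: weight_def)

lemma weight_add_mset [simp]: "weight (add_mset t F) = weight_tree t + weight F"
  by (simp add: weight_def)

lemma weight_plus [simp]: "weight (F + G) = weight F + weight G"
  by (simp add: weight_def)

lemma weight_eq_0_iff: "weight F = 0 \<longleftrightarrow> F = {#}"
proof -
  have "weight_tree t > 0" for t
    by (cases t) simp
  then show ?thesis
    by (cases F) auto
qed

definition pair_weight :: "forest \<times> forest \<Rightarrow> nat" where
  "pair_weight k = weight (fst k) + weight (snd k)"

lemma keys_prod_mset_homogeneous:
  assumes "\<And>t. t \<in># F \<Longrightarrow> Poly_Mapping.keys (f t) \<subseteq> {k. pair_weight k = g t}"
  shows "Poly_Mapping.keys (prod_mset (image_mset f F)) \<subseteq> {k. pair_weight k = sum_mset (image_mset g F)}"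
  using assms
proof (induction F)
  case empty
  then show ?case by (simp add: pair_weight_def zero_prod_def)
next
  case (add t F)
  have "Poly_Mapping.keys (f t * prod_mset (image_mset f F)) \<subseteq>
        {a + b |a b. a \<in> Poly_Mapping.keys (f t) \<and> b \<in> Poly_Mapping.keys (prod_mset (image_mset f F))}"
    by (rule keys_mult)
  also have "\<dots> \<subseteq> {k. pair_weight k = sum_mset (image_mset g (add_mset t F))}"
  proof
    fix k assume "k \<in> {a + b |a b. a \<in> Poly_Mapping.keys (f t)
                                   \<and> b \<in> Poly_Mapping.keys (prod_mset (image_mset f F))}"
    then obtain a b where "k = a + b" "a \<in> Poly_Mapping.keys (f t)"
        "b \<in> Poly_Mapping.keys (prod_mset (image_mset f F))"
      by blast
    moreover from this have "pair_weight a = g t" "pair_weight b = sum_mset (image_mset g F)"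
      using add by auto
    ultimately show "k \<in> {k. pair_weight k = sum_mset (image_mset g (add_mset t F))}"
      by (simp add: pair_weight_def)
  qed
  finally show ?case by simp
qed

lemma keys_graft_root:
  "Poly_Mapping.keys (graft_root X) \<subseteq> {(fst k, {#Node (snd k)#}) | k. k \<in> Poly_Mapping.keys X}"
  using keys_lin[of "\<lambda>k. basis (fst k, {#Node (snd k)#})" X] unfolding graft_root_eq_lin by auto

lemma keys_Delta_tree: "Poly_Mapping.keys (Delta_tree t) \<subseteq> {k. pair_weight k = weight_tree t}"
proof (induction t)
  case (Node cs)
  have "Poly_Mapping.keys (Delta_forest cs) \<subseteq> {k. pair_weight k = weight cs}"
    unfolding Delta_forest_def weight_def by (rule keys_prod_mset_homogeneous) (rule Node.IH)
  then have "Poly_Mapping.keys (graft_root (Delta_forest cs))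
      \<subseteq> {k. pair_weight k = weight_tree (Node cs)}"
    using keys_graft_root[of "Delta_forest cs"] by (force simp: pair_weight_def weight_def)
  moreover have "Poly_Mapping.keys (Delta_tree (Node cs))
      \<subseteq> Poly_Mapping.keys (basis ({#Node cs#}, {#}) :: forest \<times> forest \<Rightarrow>\<^sub>0 rat)
        \<union> Poly_Mapping.keys (graft_root (Delta_forest cs))"
    unfolding Delta_tree_Node by (rule keys_add)
  ultimately show ?case
    by (auto simp: pair_weight_def)
qed

lemma keys_Delta_forest: "Poly_Mapping.keys (Delta_forest F) \<subseteq> {k. pair_weight k = weight F}"
  unfolding Delta_forest_def weight_def
  by (rule keys_prod_mset_homogeneous) (rule keys_Delta_tree)

lemma lookup_Delta_zero: "Poly_Mapping.lookup (Delta x) (0, 0) = Poly_Mapping.lookup x 0"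
proof -
  have "Poly_Mapping.lookup (Delta_forest F) (0, 0) = (if F = {#} then 1 else 0)" for F
  proof (cases "F = {#}")
    case False
    then have "(0, 0) \<notin> Poly_Mapping.keys (Delta_forest F)"
      using keys_Delta_forest[of F] weight_eq_0_iff[of F] by (auto simp: pair_weight_def)
    then show ?thesis using False by (simp add: in_keys_iff)
  qed (simp add: lookup_one zero_prod_def)
  then have "Poly_Mapping.lookup (Delta x) (0, 0) =
      (\<Sum>a\<in>Poly_Mapping.keys x. if a = 0 then Poly_Mapping.lookup x a else 0)"
    unfolding Delta_eq_lin lookup_lin by (intro sum.cong) auto
  then show ?thesis by (simp add: in_keys_iff)
qed

lemma primitive_counit: "primitive p \<Longrightarrow> Poly_Mapping.lookup p {#} = 0"
  using lookup_Delta_zero[of p]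
  by (simp add: primitive_def lookup_add lookup_tens)

definition normalize_weight :: "HR \<Rightarrow> HR" where
  "normalize_weight y = lin (\<lambda>N. smul (1 / of_nat (weight N)) (basis N)) y"

definition normalize_pair :: "(forest \<times> forest \<Rightarrow>\<^sub>0 rat) \<Rightarrow> (forest \<times> forest \<Rightarrow>\<^sub>0 rat)" where
  "normalize_pair T = lin (\<lambda>k. smul (1 / of_nat (pair_weight k)) (basis k)) T"

lemma linear_pm_normalize_weightI: "linear_pm L \<Longrightarrow> linear_pm (\<lambda>x. normalize_weight (L x))"
  unfolding normalize_weight_def by (rule linear_pm_lin_compI)

lemma linear_pm_normalize_pairI: "linear_pm L \<Longrightarrow> linear_pm (\<lambda>x. normalize_pair (L x))"
  unfolding normalize_pair_def by (rule linear_pm_lin_compI)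

lemma Delta_normalize_weight: "Delta (normalize_weight y) = normalize_pair (Delta y)"
proof -
  have Delta_forest_normalize:
    "normalize_pair (Delta_forest N) = smul (1 / of_nat (weight N)) (Delta_forest N)" for N
  proof -
    have "normalize_pair (Delta_forest N)
        = lin (\<lambda>k. smul (1 / of_nat (weight N)) (basis k)) (Delta_forest N)"
      unfolding normalize_pair_def using keys_Delta_forest[of N] by (intro lin_cong) auto
    then show ?thesis by (simp only: lin_fun_smul lin_basis_eq)
  qed
  show ?thesis
    by (rule linear_pm_eqI[where L = "\<lambda>y. Delta (normalize_weight y)" and L' = "\<lambda>y. normalize_pair (Delta y)"])
       (auto intro!: linear_pm_intros linear_pm_DeltaI linear_pm_normalize_weightI linear_pm_normalize_pairI
             simp: normalize_weight_def Delta_eq_lin lin_smul Delta_forest_normalize)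
qed

lemma normalize_pair_emb_left: "normalize_pair (emb_left x) = emb_left (normalize_weight x)"
  by (rule linear_pm_eqI[where L = "\<lambda>x. normalize_pair (emb_left x)" and L' = "\<lambda>x. emb_left (normalize_weight x)"])
     (auto intro!: linear_pm_intros linear_pm_emb_leftI linear_pm_normalize_weightI linear_pm_normalize_pairI
           simp: normalize_weight_def normalize_pair_def emb_left_basis pair_weight_def
                 linear_pm_smul[OF linear_pm_emb_leftI[OF linear_pm_id]])

lemma normalize_pair_emb_right: "normalize_pair (emb_right y) = emb_right (normalize_weight y)"
  by (rule linear_pm_eqI[where L = "\<lambda>y. normalize_pair (emb_right y)" and L' = "\<lambda>y. emb_right (normalize_weight y)"])
     (auto intro!: linear_pm_intros linear_pm_emb_rightI linear_pm_normalize_weightI linear_pm_normalize_pairI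
           simp: normalize_weight_def normalize_pair_def emb_right_basis pair_weight_def
                 linear_pm_smul[OF linear_pm_emb_rightI[OF linear_pm_id]])

lemma primitive_normalize_weight: "primitive p \<Longrightarrow> primitive (normalize_weight p)"
  unfolding primitive_def
  by (simp add: Delta_normalize_weight linear_pm_add[OF linear_pm_normalize_pairI[OF linear_pm_id]]
                normalize_pair_emb_left[unfolded emb_left_def] normalize_pair_emb_right[unfolded emb_right_def])


lemma top_forest_eq: "top_forest M N = smul (1 / of_nat (weight N)) (grafts M N)"
  by (simp add: top_forest_def grafts_def)

lemma top_eq_lin: "top x y = lin (\<lambda>M. graft_lin M (normalize_weight y)) x"
proof -
  have "graft_lin M (normalize_weight y) = lin (\<lambda>N. smul (1 / of_nat (weight N)) (grafts M N)) y" for M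
    unfolding graft_lin_def normalize_weight_def by (simp add: lin_lin lin_smul)
  then show ?thesis
    unfolding top_def lin_def[of _ x] by (simp add: lin_def smul_sum top_forest_eq mult.assoc)
qed

lemma top_basis: "top (basis M) y = graft_lin M (normalize_weight y)"
  by (simp add: top_eq_lin)

lemma linear_pm_topI: "linear_pm L \<Longrightarrow> linear_pm (\<lambda>x. top (L x) y)"
  unfolding top_eq_lin by (rule linear_pm_lin_compI)

definition id_tens_top :: "HR \<Rightarrow> (forest \<times> forest \<Rightarrow>\<^sub>0 rat) \<Rightarrow> (forest \<times> forest \<Rightarrow>\<^sub>0 rat)" where
  "id_tens_top p T = lin (\<lambda>k. tens (basis (fst k)) (top (basis (snd k)) p)) T"

lemma linear_pm_id_tens_top: "linear_pm (id_tens_top p)"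
  by (simp add: id_tens_top_def[abs_def])

lemma id_tens_top_tens: "id_tens_top p (tens a b) = tens a (top b p)"
  by (rule bilinear_eqI[where B = "\<lambda>a b. id_tens_top p (tens a b)" and B' = "\<lambda>a b. tens a (top b p)"])
     (auto intro!: linear_pm_intros linear_pm_topI simp: id_tens_top_def)

lemma Delta_top:
  assumes "primitive p"
  shows "Delta (top x p) = emb_left (top x p) + id_tens_top p (Delta x)"
proof (rule linear_pm_eqI[where L = "\<lambda>x. Delta (top x p)"
                             and L' = "\<lambda>x. emb_left (top x p) + id_tens_top p (Delta x)"])
  show "linear_pm (\<lambda>x. Delta (top x p))"
    by (intro linear_pm_DeltaI linear_pm_topI linear_pm_id)
  show "linear_pm (\<lambda>x. emb_left (top x p) + id_tens_top p (Delta x))"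
    unfolding id_tens_top_def
    by (intro linear_pm_plus linear_pm_emb_leftI linear_pm_topI linear_pm_lin_compI linear_pm_DeltaI
              linear_pm_id)
  fix M
  have "id_tens_top p (Delta (basis M)) = graft_split M (normalize_weight p)"
    by (simp add: id_tens_top_def graft_split_def top_basis)
  then show "Delta (top (basis M) p) = emb_left (top (basis M) p) + id_tens_top p (Delta (basis M))"
    by (simp only: top_basis Delta_graft_lin_primitive[OF primitive_normalize_weight[OF assms]])
qed

lemma replicate_mset_add: "replicate_mset (m + n) x = replicate_mset m x + replicate_mset n x"
  by (induction m) auto

lemma of_nat_mult_eq_smul: "of_nat n * x = smul (of_nat n) (x :: 'a::monoid_add \<Rightarrow>\<^sub>0 rat)"
  by (simp add: smul_conv_mult)

lemma graft_forest_empty_left: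
  "graft_forest {#} F = replicate_mset (weight F) F"
proof -
  have forest_case: "graft_forest {#} F = replicate_mset (weight F) F"
    if "\<And>t. t \<in># F \<Longrightarrow> graft {#} t = replicate_mset (weight_tree t) t" for F
    using that
    by (induction F) (simp_all add: graft_forest_add_mset replicate_mset_add)
  have "graft {#} t = replicate_mset (weight_tree t) t" for t
  proof (induction t)
    case (Node cs)
    then show ?case
      by (simp add: graft_Node forest_case weight_def del: graft.simps)
  qed
  then show ?thesis by (rule forest_case)
qed

lemma top_one:
  assumes "Poly_Mapping.lookup p {#} = 0"
  shows "top 1 p = p"
proof -
  have "top 1 p = lin (\<lambda>N. smul (1 / of_nat (weight N)) (grafts {#} N)) p"
    by (simp add: top_basis graft_lin_def normalize_weight_def lin_lin lin_smul flip: basis_zero)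
  also have "\<dots> = lin basis p"
  proof (rule lin_cong)
    fix N assume "N \<in> Poly_Mapping.keys p"
    then have "weight N \<noteq> 0"
      using assms by (auto simp: in_keys_iff weight_eq_0_iff)
    then show "smul (1 / of_nat (weight N)) (grafts {#} N) = basis N"
      by (simp add: grafts_def graft_forest_empty_left of_nat_mult_eq_smul)
  qed
  finally show ?thesis
    by (simp add: lin_basis_eq)
qed

lemma counit_top: "Poly_Mapping.lookup (top x y) {#} = 0"
proof -
  have "{#} \<notin> Poly_Mapping.keys (sum_mset (image_mset basis A))" if "{#} \<notin># A" for A :: "forest multiset"
    using that
  proof (induction A)
    case (add F A)
    then show ?case
      using keys_add[of "basis F" "sum_mset (image_mset basis A)"] by auto
  qed simp
  moreover have "{#} \<notin># graft_forest M N" for M N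
    by (cases N) (auto simp: graft_forest_add_mset)
  ultimately have "{#} \<notin> Poly_Mapping.keys (grafts M N)" for M N
    unfolding grafts_def by blast
  then have "{#} \<notin> Poly_Mapping.keys (graft_lin M z)" for M z
    unfolding graft_lin_def using keys_lin[of "grafts M" z] by blast
  then have "{#} \<notin> Poly_Mapping.keys (top x y)"
    unfolding top_eq_lin using keys_lin[of "\<lambda>M. graft_lin M (normalize_weight y)" x] by blast
  then show ?thesis by (simp add: in_keys_iff)
qed


section \<open>Iterated \<open>\<top>\<close> and deconcatenation\<close>

text \<open>\<open>itop []\<close> is \<open>0\<close>; the deconcatenation formula needs the empty iterate to be \<open>1\<close>.\<close>

definition itop_unit :: "HR list \<Rightarrow> HR" where
  "itop_unit xs = (if xs = [] then 1 else itop xs)"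

lemma itop_unit_Nil [simp]: "itop_unit [] = 1"
  by (simp add: itop_unit_def)

lemma itop_unit_Cons:
  assumes "Poly_Mapping.lookup q {#} = 0"
  shows "itop_unit (q # qs) = top (itop_unit qs) q"
  using assms by (cases qs) (simp_all add: itop_unit_def top_one)

lemma Delta_itop_unit:
  assumes "\<And>q. q \<in> set xs \<Longrightarrow> primitive q"
  shows "Delta (itop_unit xs) = (\<Sum>r\<le>length xs. tens (itop_unit (drop r xs)) (itop_unit (take r xs)))"
  using assms
proof (induction xs)
  case Nil
  then show ?case by (simp add: tens_one_one)
next
  case (Cons q qs)
  have q: "primitive q" "Poly_Mapping.lookup q {#} = 0"
    using Cons.prems primitive_counit by auto
  have "Delta (itop_unit (q # qs)) = emb_left (itop_unit (q # qs)) + id_tens_top q (Delta (itop_unit qs))"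
    by (simp add: itop_unit_Cons[OF q(2)] Delta_top[OF q(1)])
  also have "id_tens_top q (Delta (itop_unit qs))
      = (\<Sum>r\<le>length qs. tens (itop_unit (drop r qs)) (top (itop_unit (take r qs)) q))"
    using Cons by (simp add: linear_pm_sum[OF linear_pm_id_tens_top] id_tens_top_tens)
  also have "\<dots> = (\<Sum>r\<le>length qs. tens (itop_unit (drop (Suc r) (q # qs))) (itop_unit (take (Suc r) (q # qs))))"
    by (simp add: itop_unit_Cons[OF q(2)])
  finally show ?case
    by (simp only: length_Cons sum.atMost_Suc_shift drop_0 take_0 itop_unit_Nil emb_left_def)
qed

lemma counit_itop:
  assumes "xs \<noteq> []" "\<And>q. q \<in> set xs \<Longrightarrow> primitive q"
  shows "Poly_Mapping.lookup (itop xs) {#} = 0"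
  using assms by (cases xs rule: itop.cases) (auto simp: primitive_counit counit_top)


section \<open>Decompositions of intervals\<close>

lemma decompsD:
  assumes "ds \<in> decomps a b"
  shows "ds \<noteq> []" "fst (ds ! 0) = a" "snd (ds ! (length ds - 1)) = b"
    "\<And>r. r < length ds \<Longrightarrow> fst (ds ! r) \<le> snd (ds ! r)"
    "\<And>r. Suc r < length ds \<Longrightarrow> fst (ds ! Suc r) = snd (ds ! r) + 1"
  using assms by (auto simp: decomps_def hd_conv_nth last_conv_nth)

lemma decompsI:
  assumes "ds \<noteq> []" "fst (ds ! 0) = a" "snd (ds ! (length ds - 1)) = b"
    "\<And>r. r < length ds \<Longrightarrow> fst (ds ! r) \<le> snd (ds ! r)"
    "\<And>r. Suc r < length ds \<Longrightarrow> fst (ds ! Suc r) = snd (ds ! r) + 1"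
  shows "ds \<in> decomps a b"
  using assms by (auto simp: decomps_def hd_conv_nth last_conv_nth)

lemma decomps_fst_ge:
  assumes "ds \<in> decomps a b" "r < length ds"
  shows "a + r \<le> fst (ds ! r)"
  using assms(2)
proof (induction r)
  case 0
  then show ?case using decompsD(2)[OF assms(1)] by simp
next
  case (Suc r)
  then show ?case
    using decompsD(4,5)[OF assms(1), of r] by simp
qed

lemma decomps_snd_less:
  assumes "ds \<in> decomps a b" "r < s" "s < length ds"
  shows "snd (ds ! r) < snd (ds ! s)"
  using assms(2,3)
proof (induction s)
  case (Suc s)
  have "snd (ds ! s) < snd (ds ! Suc s)"
    using decompsD(4,5)[OF assms(1) Suc.prems(2)] by simp
  with Suc show ?case
    by (cases "r = s") auto
qed simp

lemma decomps_snd_le: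
  assumes "ds \<in> decomps a b" "r < length ds"
  shows "snd (ds ! r) \<le> b"
proof (cases "r = length ds - 1")
  case False
  with assms(2) have "r < length ds - 1" "length ds - 1 < length ds"
    by simp_all
  then show ?thesis
    using decomps_snd_less[OF assms(1)] decompsD(3)[OF assms(1)] by fastforce
qed (use decompsD(3)[OF assms(1)] in simp)

lemma decomps_elem:
  assumes "ds \<in> decomps a b" "x \<in> set ds"
  shows "a \<le> fst x \<and> fst x \<le> snd x \<and> snd x \<le> b"
proof -
  obtain r where "r < length ds" "x = ds ! r"
    using assms(2) by (auto simp: in_set_conv_nth)
  then show ?thesis
    using decomps_fst_ge[OF assms(1)] decompsD(4)[OF assms(1)] decomps_snd_le[OF assms(1)]
    by fastforce
qed

lemma finite_decomps: "finite (decomps a b)"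
proof (rule finite_subset)
  show "decomps a b \<subseteq> {xs. set xs \<subseteq> {0..b} \<times> {0..b} \<and> length xs \<le> Suc b}"
  proof clarify
    fix ds assume ds: "ds \<in> decomps a b"
    have last: "length ds - 1 < length ds"
      using decompsD(1)[OF ds] by simp
    have "a + (length ds - 1) \<le> b"
      using decomps_fst_ge[OF ds last] decompsD(4)[OF ds last] decompsD(3)[OF ds] by simp
    moreover have "set ds \<subseteq> {0..b} \<times> {0..b}"
      using decomps_elem[OF ds] by fastforce
    ultimately show "set ds \<subseteq> {0..b} \<times> {0..b} \<and> length ds \<le> Suc b"
      by simp
  qed
  show "finite {xs. set xs \<subseteq> {0..b} \<times> {0..b} \<and> length xs \<le> Suc b}"
    by (rule finite_lists_length_le) simp
qed

lemma take_decomps: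
  assumes ds: "ds \<in> decomps a b" and r: "0 < r" "r < length ds"
  shows "take r ds \<in> decomps a (snd (ds ! (r - 1)))"
proof (rule decompsI)
  show "take r ds \<noteq> []" "fst (take r ds ! 0) = a"
    using r decompsD(1,2)[OF ds] by simp_all
  show "snd (take r ds ! (length (take r ds) - 1)) = snd (ds ! (r - 1))"
    using r by simp
  show "fst (take r ds ! k) \<le> snd (take r ds ! k)" if "k < length (take r ds)" for k
    using that decompsD(4)[OF ds, of k] by simp
  show "fst (take r ds ! Suc k) = snd (take r ds ! k) + 1" if "Suc k < length (take r ds)" for k
    using that decompsD(5)[OF ds, of k] by simp
qed

lemma drop_decomps:
  assumes ds: "ds \<in> decomps a b" and r: "0 < r" "r < length ds"
  shows "drop r ds \<in> decomps (Suc (snd (ds ! (r - 1)))) b"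
proof (rule decompsI)
  show "drop r ds \<noteq> []"
    using r by simp
  show "fst (drop r ds ! 0) = Suc (snd (ds ! (r - 1)))"
    using r decompsD(5)[OF ds, of "r - 1"] by simp
  have "r + (length ds - r - 1) = length ds - 1"
    using r by simp
  then show "snd (drop r ds ! (length (drop r ds) - 1)) = b"
    using r decompsD(3)[OF ds] by simp
  show "fst (drop r ds ! k) \<le> snd (drop r ds ! k)" if "k < length (drop r ds)" for k
    using that decompsD(4)[OF ds, of "r + k"] by simp
  show "fst (drop r ds ! Suc k) = snd (drop r ds ! k) + 1" if "Suc k < length (drop r ds)" for k
    using that decompsD(5)[OF ds, of "r + k"] by simp
qed

lemma append_decomps:
  assumes d1: "d1 \<in> decomps a l" and d2: "d2 \<in> decomps (Suc l) b"
  shows "d1 @ d2 \<in> decomps a b"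
proof (rule decompsI)
  have n1: "d1 \<noteq> []" and n2: "d2 \<noteq> []"
    using decompsD(1) d1 d2 by auto
  show "d1 @ d2 \<noteq> []" "fst ((d1 @ d2) ! 0) = a"
    using n1 decompsD(2)[OF d1] by (simp_all add: nth_append)
  have "length d1 + length d2 - 1 = length d1 + (length d2 - 1)"
    using n2 by (cases d2) auto
  then show "snd ((d1 @ d2) ! (length (d1 @ d2) - 1)) = b"
    using decompsD(3)[OF d2] by (simp add: nth_append)
  show "fst ((d1 @ d2) ! k) \<le> snd ((d1 @ d2) ! k)" if "k < length (d1 @ d2)" for k
    using that decompsD(4)[OF d1, of k] decompsD(4)[OF d2, of "k - length d1"]
    by (simp add: nth_append)
  show "fst ((d1 @ d2) ! Suc k) = snd ((d1 @ d2) ! k) + 1" if k: "Suc k < length (d1 @ d2)" for k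
  proof -
    consider "Suc k < length d1" | "Suc k = length d1" | "length d1 \<le> k"
      by linarith
    then show ?thesis
    proof cases
      case 1
      then show ?thesis using decompsD(5)[OF d1, of k] by (simp add: nth_append)
    next
      case 2
      then have "k = length d1 - 1"
        by simp
      with 2 show ?thesis
        using decompsD(3)[OF d1] decompsD(2)[OF d2] by (simp add: nth_append)
    next
      case 3
      then have "Suc k - length d1 = Suc (k - length d1)" "Suc (k - length d1) < length d2"
        using k by auto
      then show ?thesis using decompsD(5)[OF d2, of "k - length d1"] 3
        by (simp add: nth_append)
    qed
  qed
qed

text \<open>Cutting a decomposition of \<open>I(j+1,i)\<close> after its \<open>r\<close>-th interval, which ends at some
  \<open>l\<close>, is a bijection onto pairs of decompositions of \<open>I(l+1,i)\<close> and \<open>I(j+1,l)\<close>.\<close>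

lemma bij_betw_decomps_split:
  "bij_betw (\<lambda>(ds, r). (snd (ds ! (r - 1)), drop r ds, take r ds))
     (SIGMA ds:decomps (Suc j) i. {0<..<length ds})
     (SIGMA l:{j<..<i}. decomps (Suc l) i \<times> decomps (Suc j) l)"
proof (rule bij_betw_byWitness[where f' = "\<lambda>(l, d2, d1). (d1 @ d2, length d1)"])
  show "\<forall>a\<in>SIGMA ds:decomps (Suc j) i. {0<..<length ds}.
          (\<lambda>(l, d2, d1). (d1 @ d2, length d1)) ((\<lambda>(ds, r). (snd (ds ! (r - 1)), drop r ds, take r ds)) a) = a"
    by auto
  show "\<forall>b\<in>SIGMA l:{j<..<i}. decomps (Suc l) i \<times> decomps (Suc j) l.
          (\<lambda>(ds, r). (snd (ds ! (r - 1)), drop r ds, take r ds)) ((\<lambda>(l, d2, d1). (d1 @ d2, length d1)) b) = b"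
    using decompsD(1,3) by (fastforce simp: nth_append)
  show "(\<lambda>(ds, r). (snd (ds ! (r - 1)), drop r ds, take r ds)) ` (SIGMA ds:decomps (Suc j) i. {0<..<length ds})
      \<subseteq> (SIGMA l:{j<..<i}. decomps (Suc l) i \<times> decomps (Suc j) l)"
  proof
    fix x assume "x \<in> (\<lambda>(ds, r). (snd (ds ! (r - 1)), drop r ds, take r ds)) `
                         (SIGMA ds:decomps (Suc j) i. {0<..<length ds})"
    then obtain ds r where x: "x = (snd (ds ! (r - 1)), drop r ds, take r ds)"
      and ds: "ds \<in> decomps (Suc j) i" and r: "0 < r" "r < length ds"
      by auto
    have "r - 1 < length ds"
      using r by simp
    then have "j < snd (ds ! (r - 1))"
      using decomps_fst_ge[OF ds] decompsD(4)[OF ds] r by fastforce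
    moreover have "snd (ds ! (r - 1)) < i"
      using decomps_snd_less[OF ds, of "r - 1" "length ds - 1"] decompsD(3)[OF ds] r by simp
    ultimately show "x \<in> (SIGMA l:{j<..<i}. decomps (Suc l) i \<times> decomps (Suc j) l)"
      using take_decomps[OF ds r] drop_decomps[OF ds r] by (simp add: x)
  qed
  show "(\<lambda>(l, d2, d1). (d1 @ d2, length d1)) ` (SIGMA l:{j<..<i}. decomps (Suc l) i \<times> decomps (Suc j) l)
      \<subseteq> (SIGMA ds:decomps (Suc j) i. {0<..<length ds})"
    using decompsD(1) append_decomps by fastforce
qed

lemma sum_decomps_split:
  "(\<Sum>ds\<in>decomps (Suc j) i. \<Sum>r\<in>{0<..<length ds}. g (drop r ds) (take r ds))
     = (\<Sum>l\<in>{j<..<i}. \<Sum>d2\<in>decomps (Suc l) i. \<Sum>d1\<in>decomps (Suc j) l. g d2 d1)"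
proof -
  have "(\<Sum>ds\<in>decomps (Suc j) i. \<Sum>r\<in>{0<..<length ds}. g (drop r ds) (take r ds))
      = (\<Sum>(ds, r)\<in>(SIGMA ds:decomps (Suc j) i. {0<..<length ds}). g (drop r ds) (take r ds))"
    by (rule sum.Sigma) (simp_all add: finite_decomps)
  also have "\<dots> = (\<Sum>(l, dd)\<in>(SIGMA l:{j<..<i}. decomps (Suc l) i \<times> decomps (Suc j) l). g (fst dd) (snd dd))"
    using sum.reindex_bij_betw[OF bij_betw_decomps_split, of "\<lambda>(l, dd). g (fst dd) (snd dd)"]
    by (simp add: split_def)
  also have "\<dots> = (\<Sum>l\<in>{j<..<i}. \<Sum>dd\<in>decomps (Suc l) i \<times> decomps (Suc j) l. g (fst dd) (snd dd))"
    by (rule sum.Sigma[symmetric]) (simp_all add: finite_decomps)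
  also have "\<dots> = (\<Sum>l\<in>{j<..<i}. \<Sum>d2\<in>decomps (Suc l) i. \<Sum>d1\<in>decomps (Suc j) l. g d2 d1)"
    by (simp add: sum.cartesian_product split_def)
  finally show ?thesis .
qed


lemma Delta_itop:
  assumes "xs \<noteq> []" "\<And>q. q \<in> set xs \<Longrightarrow> primitive q"
  shows "Delta (itop xs) = tens (itop xs) 1 + tens 1 (itop xs)
           + (\<Sum>r\<in>{0<..<length xs}. tens (itop (drop r xs)) (itop (take r xs)))"
proof -
  let ?h = "\<lambda>r. tens (itop_unit (drop r xs)) (itop_unit (take r xs))"
  have "{..length xs} = insert 0 (insert (length xs) {0<..<length xs})"
    using assms(1) by auto
  then have split: "(\<Sum>r\<le>length xs. ?h r) = ?h 0 + ?h (length xs) + (\<Sum>r\<in>{0<..<length xs}. ?h r)"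
    using assms(1) by (simp add: add.assoc)
  have inner: "(\<Sum>r\<in>{0<..<length xs}. ?h r)
      = (\<Sum>r\<in>{0<..<length xs}. tens (itop (drop r xs)) (itop (take r xs)))"
    by (rule sum.cong) (auto simp: itop_unit_def)
  have "Delta (itop xs) = Delta (itop_unit xs)"
    using assms(1) by (simp add: itop_unit_def)
  also have "\<dots> = ?h 0 + ?h (length xs) + (\<Sum>r\<in>{0<..<length xs}. ?h r)"
    by (simp only: Delta_itop_unit[OF assms(2)] split)
  finally show ?thesis
    using assms(1) by (simp only: inner) (simp add: itop_unit_def)
qed

definition coeffC :: "(nat \<Rightarrow> nat \<Rightarrow> HR) \<Rightarrow> nat \<Rightarrow> nat \<Rightarrow> HR" where
  "coeffC p j i = (\<Sum>ds\<in>decomps (Suc j) i. itop (map (\<lambda>(a, b). p a b) ds))"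

lemma deltaC_eq_coeffC: "deltaC p i = (\<Sum>j<i. tens (coeffC p j i) (basis j)) + tens 1 (basis i)"
  by (simp add: deltaC_def coeffC_def)

lemma primitive_decomps:
  assumes "\<And>a b. 1 \<le> a \<Longrightarrow> a \<le> b \<Longrightarrow> b \<le> n \<Longrightarrow> primitive (p a b)" "i \<le> n"
    and "ds \<in> decomps (Suc j) i"
  shows "\<And>q. q \<in> set (map (\<lambda>(a, b). p a b) ds) \<Longrightarrow> primitive q"
proof -
  fix q assume "q \<in> set (map (\<lambda>(a, b). p a b) ds)"
  then obtain a b where ab: "(a, b) \<in> set ds" "q = p a b"
    by auto
  with decomps_elem[OF assms(3) ab(1)] assms(2) show "primitive q"
    by (simp add: assms(1))
qed

lemma counit_coeffC:
  assumes "\<And>a b. 1 \<le> a \<Longrightarrow> a \<le> b \<Longrightarrow> b \<le> n \<Longrightarrow> primitive (p a b)" "i \<le> n"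
  shows "Poly_Mapping.lookup (coeffC p j i) {#} = 0"
proof -
  have "Poly_Mapping.lookup (itop (map (\<lambda>(a, b). p a b) ds)) {#} = 0" if "ds \<in> decomps (Suc j) i" for ds
    by (rule counit_itop[OF _ primitive_decomps[where p = p and n = n, OF assms that]])
       (simp add: decompsD(1)[OF that])
  then show ?thesis
    by (simp add: coeffC_def lookup_sum)
qed

lemma Delta_coeffC:
  assumes "\<And>a b. 1 \<le> a \<Longrightarrow> a \<le> b \<Longrightarrow> b \<le> n \<Longrightarrow> primitive (p a b)" "i \<le> n"
  shows "Delta (coeffC p j i) = tens (coeffC p j i) 1 + tens 1 (coeffC p j i)
           + (\<Sum>l\<in>{j<..<i}. tens (coeffC p l i) (coeffC p j l))"
proof -
  let ?I = "\<lambda>ds. itop (map (\<lambda>(a, b). p a b) ds)"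
  have "Delta (coeffC p j i) = (\<Sum>ds\<in>decomps (Suc j) i. Delta (?I ds))"
    unfolding coeffC_def by (rule linear_pm_sum[OF linear_pm_Delta])
  also have "\<dots> = (\<Sum>ds\<in>decomps (Suc j) i. tens (?I ds) 1 + tens 1 (?I ds)
      + (\<Sum>r\<in>{0<..<length ds}. tens (?I (drop r ds)) (?I (take r ds))))"
  proof (rule sum.cong)
    fix ds assume ds: "ds \<in> decomps (Suc j) i"
    then have "map (\<lambda>(a, b). p a b) ds \<noteq> []"
      using decompsD(1) by simp
    from Delta_itop[OF this primitive_decomps[where p = p and n = n, OF assms ds]]
    show "Delta (?I ds) = tens (?I ds) 1 + tens 1 (?I ds)
        + (\<Sum>r\<in>{0<..<length ds}. tens (?I (drop r ds)) (?I (take r ds)))"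
      by (simp add: drop_map take_map)
  qed simp
  also have "\<dots> = tens (coeffC p j i) 1 + tens 1 (coeffC p j i)
      + (\<Sum>ds\<in>decomps (Suc j) i. \<Sum>r\<in>{0<..<length ds}. tens (?I (drop r ds)) (?I (take r ds)))"
    by (simp add: sum.distrib coeffC_def tens_sum_left tens_sum_right)
  also have "(\<Sum>ds\<in>decomps (Suc j) i. \<Sum>r\<in>{0<..<length ds}. tens (?I (drop r ds)) (?I (take r ds)))
      = (\<Sum>l\<in>{j<..<i}. \<Sum>d2\<in>decomps (Suc l) i. \<Sum>d1\<in>decomps (Suc j) l. tens (?I d2) (?I d1))"
    by (rule sum_decomps_split)
  also have "\<dots> = (\<Sum>l\<in>{j<..<i}. tens (coeffC p l i) (coeffC p j l))"
    unfolding coeffC_def by (subst tens_sum_left) (simp only: tens_sum_right)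
  finally show ?thesis .
qed


definition tens_index :: "nat \<Rightarrow> (forest \<times> forest \<Rightarrow>\<^sub>0 rat) \<Rightarrow> (forest \<times> forest \<times> nat \<Rightarrow>\<^sub>0 rat)" where
  "tens_index j S = lin (\<lambda>(A, B). basis (A, B, j)) S"

lemma linear_pm_Delta_id: "linear_pm Delta_id"
  by (simp add: Delta_id_def[abs_def])

lemma linear_pm_id_tensor: "linear_pm (id_tensor DC)"
  by (simp add: id_tensor_def[abs_def])

lemma linear_pm_counit_id: "linear_pm counit_id"
  by (simp add: counit_id_def[abs_def])

lemma linear_pm_tens_index: "linear_pm (tens_index j)"
  by (simp add: tens_index_def[abs_def])

lemma Delta_id_tens_basis: "Delta_id (tens x (basis j)) = tens_index j (Delta x)"
proof (rule linear_pm_eqI[where L = "\<lambda>x. Delta_id (tens x (basis j))" and L' = "\<lambda>x. tens_index j (Delta x)"])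
  show "linear_pm (\<lambda>x. Delta_id (tens x (basis j)))"
    unfolding Delta_id_def by (intro linear_pm_intros)
  show "linear_pm (\<lambda>x. tens_index j (Delta x))"
    unfolding tens_index_def by (intro linear_pm_lin_compI linear_pm_DeltaI linear_pm_id)
qed (simp add: Delta_id_def tens_index_def)

lemma id_tensor_tens_basis: "id_tensor DC (tens x (basis j)) = tens x (DC (basis j))"
  by (rule linear_pm_eqI[where L = "\<lambda>x. id_tensor DC (tens x (basis j))" and L' = "\<lambda>x. tens x (DC (basis j))"])
     (auto intro!: linear_pm_intros simp: id_tensor_def)

lemma tens_tens_basis: "tens x (tens y (basis j)) = tens_index j (tens x y)"
  by (rule bilinear_eqI[where B = "\<lambda>x y. tens x (tens y (basis j))" and B' = "\<lambda>x y. tens_index j (tens x y)"])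
     (auto intro!: linear_pm_intros simp: tens_index_def)

lemma counit_id_tens: "counit_id (tens x y) = smul (Poly_Mapping.lookup x {#}) y"
  by (rule bilinear_eqI[where B = "\<lambda>x y. counit_id (tens x y)"
                          and B' = "\<lambda>x y. smul (Poly_Mapping.lookup x {#}) y"])
     (auto intro!: linear_pmI linear_pm_intros
           simp: counit_id_def counit_def lookup_add smul_add_left smul_add_right mult.commute)


lemma sum_triangle_swap:
  "(\<Sum>j<a. \<Sum>l\<in>{j<..<a}. g j l) = (\<Sum>l<a. \<Sum>j<l. g j l)" for a :: nat
proof -
  have "(\<Sum>j<a. \<Sum>l\<in>{l. l \<in> {..<a} \<and> j < l}. g j l) = (\<Sum>l<a. \<Sum>j\<in>{j. j \<in> {..<a} \<and> j < l}. g j l)"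
    by (rule sum.swap_restrict) simp_all
  moreover have "{l. l \<in> {..<a} \<and> j < l} = {j<..<a}" for j
    by auto
  moreover have "{j. j \<in> {..<a} \<and> j < l} = {..<l}" if "l < a" for l
    using that by auto
  ultimately show ?thesis
    by simp
qed

lemma Delta_id_deltaC:
  assumes "\<And>a b. 1 \<le> a \<Longrightarrow> a \<le> b \<Longrightarrow> b \<le> n \<Longrightarrow> primitive (p a b)" "i \<le> n"
  shows "Delta_id (deltaC p i) =
           (\<Sum>j<i. tens_index j (tens (coeffC p j i) 1)) + (\<Sum>j<i. tens_index j (tens 1 (coeffC p j i)))
           + (\<Sum>j<i. \<Sum>l\<in>{j<..<i}. tens_index j (tens (coeffC p l i) (coeffC p j l)))
           + tens_index i 1"
proof -
  have "Delta_id (deltaC p i) = (\<Sum>j<i. tens_index j (Delta (coeffC p j i))) + tens_index i 1"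
    by (simp add: deltaC_eq_coeffC linear_pm_add[OF linear_pm_Delta_id]
                  linear_pm_sum[OF linear_pm_Delta_id] Delta_id_tens_basis)
  also have "\<dots> = (\<Sum>j<i. tens_index j (tens (coeffC p j i) 1) + tens_index j (tens 1 (coeffC p j i))
      + (\<Sum>l\<in>{j<..<i}. tens_index j (tens (coeffC p l i) (coeffC p j l)))) + tens_index i 1"
    by (simp add: Delta_coeffC[OF assms] linear_pm_add[OF linear_pm_tens_index]
                  linear_pm_sum[OF linear_pm_tens_index])
  finally show ?thesis
    by (simp add: sum.distrib)
qed

lemma id_tensor_deltaC:
  "id_tensor (DeltaC p) (deltaC p i) =
     (\<Sum>l<i. \<Sum>j<l. tens_index j (tens (coeffC p l i) (coeffC p j l)))
     + (\<Sum>j<i. tens_index j (tens (coeffC p j i) 1)) + (\<Sum>j<i. tens_index j (tens 1 (coeffC p j i)))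
     + tens_index i 1"
proof -
  have "id_tensor (DeltaC p) (deltaC p i) = (\<Sum>l<i. tens (coeffC p l i) (deltaC p l)) + tens 1 (deltaC p i)"
    by (simp add: deltaC_eq_coeffC[of p i] linear_pm_add[OF linear_pm_id_tensor]
                  linear_pm_sum[OF linear_pm_id_tensor] id_tensor_tens_basis DeltaC_def)
  also have "\<dots> = (\<Sum>l<i. (\<Sum>j<l. tens_index j (tens (coeffC p l i) (coeffC p j l)))
                          + tens_index l (tens (coeffC p l i) 1))
                 + ((\<Sum>j<i. tens_index j (tens 1 (coeffC p j i))) + tens_index i 1)"
    by (simp add: deltaC_eq_coeffC tens_add_right tens_sum_right tens_tens_basis tens_one_one)
  finally show ?thesis
    by (simp add: sum.distrib add.assoc)
qed

lemma coassoc_deltaC: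
  assumes "\<And>a b. 1 \<le> a \<Longrightarrow> a \<le> b \<Longrightarrow> b \<le> n \<Longrightarrow> primitive (p a b)" "i \<le> n"
  shows "Delta_id (deltaC p i) = id_tensor (DeltaC p) (deltaC p i)"
proof -
  have "(\<Sum>j<i. \<Sum>l\<in>{j<..<i}. tens_index j (tens (coeffC p l i) (coeffC p j l)))
      = (\<Sum>l<i. \<Sum>j<l. tens_index j (tens (coeffC p l i) (coeffC p j l)))"
    by (rule sum_triangle_swap)
  then show ?thesis
    by (simp add: Delta_id_deltaC[OF assms] id_tensor_deltaC algebra_simps)
qed

lemma counit_deltaC:
  assumes "\<And>a b. 1 \<le> a \<Longrightarrow> a \<le> b \<Longrightarrow> b \<le> n \<Longrightarrow> primitive (p a b)" "i \<le> n"
  shows "counit_id (deltaC p i) = basis i"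
  by (simp add: deltaC_eq_coeffC linear_pm_add[OF linear_pm_counit_id] linear_pm_sum[OF linear_pm_counit_id]
                counit_id_tens counit_coeffC[OF assms])


lemma lookup_deltaC_above: "i < k \<Longrightarrow> Poly_Mapping.lookup (deltaC p i) (F, k) = 0"
  by (simp add: deltaC_def lookup_add lookup_sum lookup_tens basis_def lookup_single)

lemma linear_pm_lin_cong:
  assumes "linear_pm L" "linear_pm L'" "\<And>a. a \<in> Poly_Mapping.keys v \<Longrightarrow> L (f a) = L' (f a)"
  shows "L (lin f v) = L' (lin f v)"
  by (simp add: linear_pm_lin_comp[OF assms(1)] linear_pm_lin_comp[OF assms(2)] assms(3) cong: lin_cong)

lemma is_left_comodule_lin:
  assumes "\<And>a. a \<in> B \<Longrightarrow> Delta_id (d a) = id_tensor (lin d) (d a)"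
    and "\<And>a. a \<in> B \<Longrightarrow> counit_id (d a) = basis a"
    and "\<And>a F i. a \<in> B \<Longrightarrow> Poly_Mapping.lookup (d a) (F, i) \<noteq> 0 \<Longrightarrow> i \<in> B"
  shows "is_left_comodule B (lin d)"
  unfolding is_left_comodule_def
proof (intro allI impI conjI)
  fix u v :: "nat \<Rightarrow>\<^sub>0 rat" and r
  show "lin d (u + v) = lin d u + lin d v" "lin d (smul r v) = smul r (lin d v)"
    by (simp_all add: lin_add lin_smul)
next
  fix v :: "nat \<Rightarrow>\<^sub>0 rat" and F i
  assume v: "Poly_Mapping.keys v \<subseteq> B"
  show "Delta_id (lin d v) = id_tensor (lin d) (lin d v)"
    using v assms(1) by (auto intro: linear_pm_lin_cong[OF linear_pm_Delta_id linear_pm_id_tensor])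
  have "counit_id (lin d v) = lin (\<lambda>a. counit_id (d a)) v"
    by (rule linear_pm_lin_comp[OF linear_pm_counit_id])
  also have "\<dots> = lin basis v"
    using v assms(2) by (intro lin_cong) auto
  finally show "counit_id (lin d v) = v"
    by (simp add: lin_basis_eq)
  assume "Poly_Mapping.lookup (lin d v) (F, i) \<noteq> 0"
  then obtain a where "a \<in> Poly_Mapping.keys v" "Poly_Mapping.lookup (d a) (F, i) \<noteq> 0"
    by (auto simp: lookup_lin elim: sum.not_neutral_contains_not_neutral)
  with v assms(3) show "i \<in> B"
    by blast
qed

theorem proposition5p2:
  fixes n :: nat and p :: "nat \<Rightarrow> nat \<Rightarrow> HR"
  assumes "n \<ge> 1"
    and "\<And>i j. 1 \<le> i \<Longrightarrow> i \<le> j \<Longrightarrow> j \<le> n \<Longrightarrow> primitive (p i j)"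
  shows "is_left_comodule {0..n} (DeltaC p)"
proof -
  have DeltaC_eq_lin: "DeltaC p = lin (deltaC p)"
    by (simp add: fun_eq_iff DeltaC_def)
  have "is_left_comodule {0..n} (lin (deltaC p))"
  proof (rule is_left_comodule_lin)
    fix a assume "a \<in> {0..n}"
    then show "Delta_id (deltaC p a) = id_tensor (lin (deltaC p)) (deltaC p a)"
      "counit_id (deltaC p a) = basis a"
      using coassoc_deltaC[OF assms(2)] counit_deltaC[OF assms(2)] by (auto simp: DeltaC_eq_lin)
    show "i \<in> {0..n}" if "Poly_Mapping.lookup (deltaC p a) (F, i) \<noteq> 0" for F i
      using that \<open>a \<in> {0..n}\<close> lookup_deltaC_above[of a i p F] by fastforce
  qed
  then show ?thesis
    by (simp add: DeltaC_eq_lin)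
qed

end
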